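(* If an unrestricted tree-to-tree Hennie machine $\mathcal{H}$ is narrow-visit on all inputs, then it is a tree-to-tree Hennie machine and $[\![\mathcal{H}]\!]$ has linear height increase: there are constants $c,d$ such that $\mathrm{height}([\![\mathcal{H}]\!](t))\le c\,\mathrm{height}(t)+d$ for every $t$ in its domain.
   Context: Trees: ranked alphabets are finite sets with a rank function to $\mathbb{N}$; $T_\Sigma$ is the set of finite ordered $\Sigma$-labeled trees where a node labeled $\sigma$ has $\mathrm{rank}(\sigma)$ children (nodes are words over positive integers, root $\varepsilon$, $i$-th child of $u$ is $ui$); $T_\Sigma[Y]$ allows extra rank-$0$ leaves labeled in $Y$. $\mathrm{height}(t)$ is the maximal number of edges on a root-to-leaf path. The ancestor order on nodes is the prefix order; an antichain is a set of pairwise incomparable nodes. Hennie machines: a uTHM is $(Q,M,\top,\Sigma,\Gamma,q_{init},\delta)$ with finite states $Q$, finite memory symbols $M\ni\top$, $q_{init}\in Q$, partial $\delta:Q\times\Sigma\times M\rightharpoonup T_\Gamma[Q\times M\times D]$, $D=\{\uparrow,1,..,\max\mathrm{rank}\Sigma\}$, leaves $(q',m',d)$ of $\delta(q,\sigma,m)$ having $d\in\{\uparrow,1,..,\mathrm{rank}\sigma\}$. Configurations on $t$ are $(u,q,\mu)$, $\mu:$ nodes$\to M$, initially $(\varepsilon,q_{init},\text{constant }\top)$; the step of $(u,q,\mu)$ is $\delta(q,\mathrm{lab}_t(u),\mu(u))$ with each leaf $(q',m',d)$ replaced by $(ud,q',\mu[u\mapsto m'])$ ($ud$ the parent if $d=\uparrow$,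 else the $d$-th child; undefined if nonexistent). Confluent rewriting of configuration leaves by steps from the initial configuration yields the output $[\![\mathcal{H}]\!](t)\in T_\Gamma$, if any. A branch-outputting run is $C_0,..,C_n$ with $C_0$ initial and $C_{i+1}$ a leaf label of the step of $C_i$; its number of visits at a node set $S$ is $|\{i:\text{position of }C_i\in S\}|$. A THM is a uTHM for which some $N$ bounds visits at every single node, for all inputs and runs. A uTHM is narrow-visit on all inputs if some $N$ bounds the visits at every antichain $S$ of $t$, for all inputs $t$ and all runs on $t$. *)

theory Defs
  imports Main
begin

text \<open>A tree over the ranked alphabet (A, rk) with extra leaves in Y (i.e. an element of
  T_A[Y]) is one satisfying wfT A rk Y; T_A is wfT A rk {}.\<close>
datatype ('a, 'y) rtree = Nd 'a "('a, 'y) rtree list" | Vr 'y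

fun wfT :: "'a set \<Rightarrow> ('a \<Rightarrow> nat) \<Rightarrow> 'y set \<Rightarrow> ('a, 'y) rtree \<Rightarrow> bool" where
  "wfT A rk Y (Nd a ts) = (a \<in> A \<and> length ts = rk a \<and> (\<forall>s\<in>set ts. wfT A rk Y s))"
| "wfT A rk Y (Vr y) = (y \<in> Y)"

text \<open>Subtree at a node; nodes are words over positive integers, the i-th child of u is u@[i].\<close>
fun subt :: "('a, 'y) rtree \<Rightarrow> nat list \<Rightarrow> ('a, 'y) rtree option" where
  "subt t [] = Some t"
| "subt (Nd a ts) (i # u) = (if 1 \<le> i \<and> i \<le> length ts then subt (ts ! (i - 1)) u else None)"
| "subt (Vr y) (i # u) = None"

definition pos :: "('a, 'y) rtree \<Rightarrow> nat list set" where
  "pos t = {u. subt t u \<noteq> None}"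

definition lab :: "('a, 'y) rtree \<Rightarrow> nat list \<Rightarrow> 'a" where
  "lab t u = (case the (subt t u) of Nd a _ \<Rightarrow> a)"

definition height :: "('a, 'y) rtree \<Rightarrow> nat" where
  "height t = Max (length ` pos t)"

definition anc :: "nat list \<Rightarrow> nat list \<Rightarrow> bool" where
  "anc u v \<longleftrightarrow> (\<exists>w. v = u @ w)"

definition antichain :: "nat list set \<Rightarrow> bool" where
  "antichain S \<longleftrightarrow> (\<forall>u\<in>S. \<forall>v\<in>S. u \<noteq> v \<longrightarrow> \<not> anc u v \<and> \<not> anc v u)"

datatype dir = Up | Dn nat

record ('q, 'm, 's, 'g) uthm =
  Qs :: "'q set"
  Ms :: "'m set"
  topm :: 'm
  Sig :: "'s set"
  rkS :: "'s \<Rightarrow> nat"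
  Gam :: "'g set"
  rkG :: "'g \<Rightarrow> nat"
  qinit :: 'q
  delta :: "'q \<Rightarrow> 's \<Rightarrow> 'm \<Rightarrow> ('g, 'q \<times> 'm \<times> dir) rtree option"

definition is_uTHM :: "('q, 'm, 's, 'g) uthm \<Rightarrow> bool" where
  "is_uTHM H \<longleftrightarrow>
     finite (Qs H) \<and> finite (Ms H) \<and> topm H \<in> Ms H \<and> qinit H \<in> Qs H \<and>
     finite (Sig H) \<and> finite (Gam H) \<and>
     (\<forall>q \<sigma> m r. delta H q \<sigma> m = Some r \<longrightarrow>
        q \<in> Qs H \<and> \<sigma> \<in> Sig H \<and> m \<in> Ms H \<and>
        wfT (Gam H) (rkG H) (Qs H \<times> Ms H \<times> UNIV) r \<and>
        (\<forall>(q', m', d) \<in> set2_rtree r.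
           d = Up \<or> (\<exists>i. d = Dn i \<and> 1 \<le> i \<and> i \<le> rkS H \<sigma>)))"

text \<open>Input trees; they are in T_Sigma when wfT (Sig H) (rkS H) {} holds.\<close>
type_synonym 's itree = "('s, unit) rtree"

type_synonym ('q, 'm) config = "nat list \<times> 'q \<times> (nat list \<Rightarrow> 'm)"

definition move :: "('s, 'y) rtree \<Rightarrow> nat list \<Rightarrow> dir \<Rightarrow> nat list option" where
  "move t u d = (case d of
      Up \<Rightarrow> (if u = [] then None else Some (butlast u))
    | Dn i \<Rightarrow> (if u @ [i] \<in> pos t then Some (u @ [i]) else None))"

definition init_conf :: "('q, 'm, 's, 'g) uthm \<Rightarrow> ('q, 'm) config" where
  "init_conf H = ([], qinit H, \<lambda>_. topm H)"

definition step :: "('q, 'm, 's, 'g) uthm \<Rightarrow> 's itree \<Rightarrow> ('q, 'm) config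
                    \<Rightarrow> ('g, ('q, 'm) config) rtree option" where
  "step H t c = (case c of (u, q, \<mu>) \<Rightarrow>
     if u \<in> pos t then
       (case delta H q (lab t u) (\<mu> u) of
          None \<Rightarrow> None
        | Some r \<Rightarrow>
            if (\<forall>(q', m', d) \<in> set2_rtree r. move t u d \<noteq> None)
            then Some (map_rtree id (\<lambda>(q', m', d). (the (move t u d), q', \<mu>(u := m'))) r)
            else None)
     else None)"

inductive rw :: "('q, 'm, 's, 'g) uthm \<Rightarrow> 's itree \<Rightarrow> ('g, ('q, 'm) config) rtree
                 \<Rightarrow> ('g, ('q, 'm) config) rtree \<Rightarrow> bool" for H t where
  leaf: "step H t c = Some r \<Longrightarrow> rw H t (Vr c) r"
| inner: "i < length ts \<Longrightarrow> rw H t (ts ! i) s' \<Longrightarrow> rw H t (Nd g ts) (Nd g (ts[i := s']))"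

text \<open>[[H]](t) = s: rewriting from the initial configuration reaches the
  configuration-free tree s (by confluence, s is unique).\<close>
definition hm_output :: "('q, 'm, 's, 'g) uthm \<Rightarrow> 's itree \<Rightarrow> ('g, ('q, 'm) config) rtree \<Rightarrow> bool" where
  "hm_output H t s \<longleftrightarrow> (rw H t)\<^sup>*\<^sup>* (Vr (init_conf H)) s \<and> set2_rtree s = {}"

text \<open>Branch-outputting runs C_0, ..., C_n as nonempty lists.\<close>
definition is_run :: "('q, 'm, 's, 'g) uthm \<Rightarrow> 's itree \<Rightarrow> ('q, 'm) config list \<Rightarrow> bool" where
  "is_run H t cs \<longleftrightarrow> cs \<noteq> [] \<and> hd cs = init_conf H \<and>
     (\<forall>i. Suc i < length cs \<longrightarrow>
        (\<exists>r. step H t (cs ! i) = Some r \<and> cs ! Suc i \<in> set2_rtree r))"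

definition visits :: "('q, 'm) config list \<Rightarrow> nat list set \<Rightarrow> nat" where
  "visits cs S = card {i. i < length cs \<and> fst (cs ! i) \<in> S}"

definition is_THM :: "('q, 'm, 's, 'g) uthm \<Rightarrow> bool" where
  "is_THM H \<longleftrightarrow> is_uTHM H \<and>
     (\<exists>N. \<forall>t cs u. wfT (Sig H) (rkS H) {} t \<longrightarrow> is_run H t cs \<longrightarrow> u \<in> pos t \<longrightarrow>
         visits cs {u} \<le> N)"

definition narrow_visit :: "('q, 'm, 's, 'g) uthm \<Rightarrow> bool" where
  "narrow_visit H \<longleftrightarrow>
     (\<exists>N. \<forall>t cs S. wfT (Sig H) (rkS H) {} t \<longrightarrow> is_run H t cs \<longrightarrow>
         S \<subseteq> pos t \<longrightarrow> antichain S \<longrightarrow> visits cs S \<le> N)"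

end

theory Submission
  imports Defs
begin

text \<open>Every node of an output tree lies below a chain of right-hand sides of the transition
  function, one per configuration of a branch-outputting run C_0, ..., C_n; each right-hand side
  has height at most some h, so the node has depth at most h (n + 1). On the other hand the nodes
  of t of a fixed depth form an antichain, so a narrow-visit machine visits each of the
  height t + 1 levels of t at most N times and every run has length at most N (height t + 1) + 1.
  Bounded visits at single nodes are the special case of singleton antichains.\<close>

lemma subt_size:
  "subt t u = Some s \<Longrightarrow> length u + size s \<le> size t \<and> (\<forall>i\<in>set u. i \<le> size t)"
proof (induction t u rule: subt.induct)
  case (2 a ts i u)
  then have i: "1 \<le> i \<and> i \<le> length ts" and sub: "subt (ts ! (i - 1)) u = Some s"
    by (auto split: if_splits)
  have "size (ts ! (i - 1)) \<le> size_list size ts"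
    using i by (intro size_list_estimation') auto
  moreover have "length ts \<le> size_list size ts"
    by (induction ts) auto
  ultimately show ?case
    using "2.IH"[OF i sub] i by auto
qed auto

lemma finite_pos: "finite (pos t)"
proof (rule finite_subset)
  show "pos t \<subseteq> {u. set u \<subseteq> {..size t} \<and> length u \<le> size t}"
    unfolding pos_def using subt_size by fastforce
  show "finite {u. set u \<subseteq> {..size t} \<and> length u \<le> size t}"
    using finite_lists_length_le[of "{..size t}" "size t"] by simp
qed

lemma Nil_in_pos [simp]: "[] \<in> pos t"
  by (simp add: pos_def)

lemma length_le_height: "u \<in> pos t \<Longrightarrow> length u \<le> height t"
  unfolding height_def using finite_pos by (auto intro: Max_ge)

lemma height_le_iff: "height t \<le> n \<longleftrightarrow> (\<forall>u\<in>pos t. length u \<le> n)"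
proof -
  have "length ` pos t \<noteq> {}"
    using Nil_in_pos[of t] by blast
  then show ?thesis
    unfolding height_def using finite_pos[of t] by (simp add: Max_le_iff)
qed

lemma subt_map_rtree: "subt (map_rtree f g r) w = map_option (map_rtree f g) (subt r w)"
  by (induction r w rule: subt.induct) auto

lemma pos_map_rtree [simp]: "pos (map_rtree f g r) = pos r"
  by (simp add: pos_def subt_map_rtree)

lemma subt_Vr_in_set2: "subt r w = Some (Vr c) \<Longrightarrow> c \<in> set2_rtree r"
  by (induction r w rule: subt.induct) (auto split: if_splits)

definition level :: "('a, 'y) rtree \<Rightarrow> nat \<Rightarrow> nat list set" where
  "level t k = {u \<in> pos t. length u = k}"

lemma anc_same_length: "anc u v \<Longrightarrow> length u = length v \<Longrightarrow> u = v"
  unfolding anc_def by auto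

lemma antichain_level: "antichain (level t k)"
  unfolding antichain_def level_def using anc_same_length by fastforce

lemma antichain_singleton: "antichain {u}"
  by (simp add: antichain_def)

lemma step_pos: "step H t c = Some r \<Longrightarrow> fst c \<in> pos t"
  by (cases c) (simp add: step_def split: if_splits)

lemma is_run_snoc:
  assumes "is_run H t cs" "step H t (last cs) = Some r" "c \<in> set2_rtree r"
  shows "is_run H t (cs @ [c])"
  unfolding is_run_def
proof (intro conjI allI impI)
  fix i assume i: "Suc i < length (cs @ [c])"
  show "\<exists>r. step H t ((cs @ [c]) ! i) = Some r \<and> (cs @ [c]) ! Suc i \<in> set2_rtree r"
  proof (cases "Suc i < length cs")
    case True
    then show ?thesis using assms(1) by (auto simp: is_run_def nth_append)
  next
    case False
    with i have "i = length cs - 1" "Suc i = length cs" by simp_all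
    with assms show ?thesis by (auto simp: is_run_def nth_append last_conv_nth)
  qed
qed (use assms(1) in \<open>auto simp: is_run_def\<close>)

lemma length_run_le:
  assumes run: "is_run H t cs"
    and narrow: "\<And>S. S \<subseteq> pos t \<Longrightarrow> antichain S \<Longrightarrow> visits cs S \<le> N"
  shows "length cs \<le> (height t + 1) * N + 1"
proof -
  let ?L = "\<lambda>k. {i. i < length cs \<and> fst (cs ! i) \<in> level t k}"
  \<comment> \<open>every configuration of a run but the last has a step, so it sits on a node of t\<close>
  have cover: "{..<length cs - 1} \<subseteq> (\<Union>k\<le>height t. ?L k)"
  proof
    fix i assume "i \<in> {..<length cs - 1}"
    then have i: "Suc i < length cs" by auto
    with run obtain r where "step H t (cs ! i) = Some r"
      unfolding is_run_def by blast
    then have "fst (cs ! i) \<in> pos t" by (rule step_pos)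
    with i show "i \<in> (\<Union>k\<le>height t. ?L k)"
      by (intro UN_I[of "length (fst (cs ! i))"]) (simp_all add: level_def length_le_height)
  qed
  have "finite (\<Union>k\<le>height t. ?L k)"
    by simp
  from card_mono[OF this cover] have "length cs - 1 \<le> card (\<Union>k\<le>height t. ?L k)"
    by simp
  also have "\<dots> \<le> (\<Sum>k\<le>height t. card (?L k))"
    by (rule card_UN_le) simp
  also have "\<dots> \<le> (\<Sum>k\<le>height t. N)"
  proof (rule sum_mono)
    fix k
    have "level t k \<subseteq> pos t" by (simp add: level_def)
    from narrow[OF this antichain_level] show "card (?L k) \<le> N"
      by (simp add: visits_def)
  qed
  finally have "length cs - 1 \<le> (height t + 1) * N" by simp
  then show ?thesis by linarith
qed

lemma pos_rw_cases:
  assumes "rw H t T T'" "p' \<in> pos T'"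
  shows "(\<exists>p c r w. subt T p = Some (Vr c) \<and> step H t c = Some r \<and> p' = p @ w \<and>
            subt T' p' = subt r w)
       \<or> (p' \<in> pos T \<and> (\<forall>c. subt T' p' = Some (Vr c) \<longrightarrow> subt T p' = Some (Vr c)))"
  using assms
proof (induction arbitrary: p' rule: rw.induct)
  case (leaf c r)
  then show ?case by (intro disjI1 exI[of _ "[]"]) auto
next
  case (inner i ts s' g)
  show ?case
  proof (cases p')
    case Nil
    then show ?thesis by simp
  next
    case (Cons j u)
    with inner.prems have j: "1 \<le> j" "j \<le> length ts"
      and u: "subt (ts[i := s'] ! (j - 1)) u \<noteq> None"
      by (auto simp: pos_def split: if_splits)
    show ?thesis
    proof (cases "j - 1 = i")
      case True
      with u inner.hyps(1) have "u \<in> pos s'" by (simp add: pos_def)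
      from inner.IH[OF this] show ?thesis
      proof (elim disjE exE conjE)
        fix p c r w
        assume "subt (ts ! i) p = Some (Vr c)" "step H t c = Some r" "u = p @ w" "subt s' u = subt r w"
        with True j inner.hyps(1) Cons show ?thesis
          by (intro disjI1 exI[of _ "j # p"] exI[of _ c] exI[of _ r] exI[of _ w]) auto
      next
        assume "u \<in> pos (ts ! i)" "\<forall>c. subt s' u = Some (Vr c) \<longrightarrow> subt (ts ! i) u = Some (Vr c)"
        with True j inner.hyps(1) Cons show ?thesis
          by (auto simp: pos_def)
      qed
    next
      case False
      with j u Cons show ?thesis by (auto simp: pos_def)
    qed
  qed
qed

lemma rhs_height_bounded:
  assumes "is_uTHM H"
  shows "\<exists>h. \<forall>q \<sigma> m r. delta H q \<sigma> m = Some r \<longrightarrow> height r \<le> h"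
proof -
  let ?rhs = "{r. \<exists>q \<sigma> m. delta H q \<sigma> m = Some r}"
  have "?rhs \<subseteq> (\<lambda>(q, \<sigma>, m). the (delta H q \<sigma> m)) ` (Qs H \<times> Sig H \<times> Ms H)"
  proof
    fix r assume "r \<in> ?rhs"
    then obtain q \<sigma> m where d: "delta H q \<sigma> m = Some r" by blast
    with assms have "(q, \<sigma>, m) \<in> Qs H \<times> Sig H \<times> Ms H"
      unfolding is_uTHM_def by blast
    with d show "r \<in> (\<lambda>(q, \<sigma>, m). the (delta H q \<sigma> m)) ` (Qs H \<times> Sig H \<times> Ms H)"
      by (intro image_eqI[of _ _ "(q, \<sigma>, m)"]) auto
  qed
  moreover have "finite (Qs H \<times> Sig H \<times> Ms H)"
    using assms unfolding is_uTHM_def by simp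
  ultimately have "finite (height ` ?rhs)"
    using finite_surj by blast
  then obtain h where "\<forall>n \<in> height ` ?rhs. n \<le> h"
    unfolding finite_nat_set_iff_bounded_le ..
  then show ?thesis
    by (intro exI[of _ h]) blast
qed

text \<open>At a configuration leaf the witnessing
  run ends in that configuration, and the bound keeps a slack of h for the right-hand side that
  will replace the leaf.\<close>

definition depths_bounded_by_runs ::
    "('q, 'm, 's, 'g) uthm \<Rightarrow> 's itree \<Rightarrow> nat \<Rightarrow> ('g, ('q, 'm) config) rtree \<Rightarrow> bool" where
  "depths_bounded_by_runs H t h T \<longleftrightarrow>
     (\<forall>p\<in>pos T. \<exists>cs. is_run H t cs \<and> length p \<le> h * length cs \<and>
        (\<forall>c. subt T p = Some (Vr c) \<longrightarrow> last cs = c \<and> length p + h \<le> h * length cs))"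

context
  fixes H :: "('q, 'm, 's, 'g) uthm" and h :: nat
  assumes rhs_height: "\<And>q \<sigma> m r. delta H q \<sigma> m = Some r \<Longrightarrow> height r \<le> h"
begin

lemma length_le_step_height:
  assumes "step H t c = Some r" "w \<in> pos r"
  shows "length w \<le> h"
proof -
  obtain u q \<mu> where c: "c = (u, q, \<mu>)" by (cases c)
  with assms(1) obtain r0 f where "delta H q (lab t u) (\<mu> u) = Some r0" and "r = map_rtree id f r0"
    by (auto simp: step_def split: if_splits option.splits)
  with assms(2) rhs_height show ?thesis
    by (metis length_le_height order_trans pos_map_rtree)
qed

lemma depths_bounded_by_runs_rw:
  assumes rw: "rw H t T T'" and bounded: "depths_bounded_by_runs H t h T"
  shows "depths_bounded_by_runs H t h T'"
  unfolding depths_bounded_by_runs_def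
proof
  fix p' assume p': "p' \<in> pos T'"
  from pos_rw_cases[OF rw p'] show "\<exists>cs. is_run H t cs \<and> length p' \<le> h * length cs \<and>
      (\<forall>c. subt T' p' = Some (Vr c) \<longrightarrow> last cs = c \<and> length p' + h \<le> h * length cs)"
  proof (elim disjE exE conjE)
    fix p c r w
    assume pc: "subt T p = Some (Vr c)" and st: "step H t c = Some r"
      and p'_eq: "p' = p @ w" and sw: "subt T' p' = subt r w"
    from pc have "p \<in> pos T" by (simp add: pos_def)
    with bounded pc obtain cs where cs: "is_run H t cs" "last cs = c" "length p + h \<le> h * length cs"
      unfolding depths_bounded_by_runs_def by blast
    from sw p' have "w \<in> pos r" by (simp add: pos_def)
    with st have w: "length w \<le> h" by (rule length_le_step_height)
    show ?thesis
    proof (cases "\<exists>c'. subt r w = Some (Vr c')")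
      case True
      then obtain c' where c': "subt r w = Some (Vr c')" ..
      have "is_run H t (cs @ [c'])"
        using is_run_snoc[OF cs(1) _ subt_Vr_in_set2[OF c']] st cs(2) by simp
      with cs w p'_eq sw c' show ?thesis
        by (intro exI[of _ "cs @ [c']"]) auto
    next
      case False
      with cs w p'_eq sw show ?thesis
        by (intro exI[of _ cs]) auto
    qed
  next
    assume "p' \<in> pos T" "\<forall>c. subt T' p' = Some (Vr c) \<longrightarrow> subt T p' = Some (Vr c)"
    with bounded show ?thesis
      unfolding depths_bounded_by_runs_def by blast
  qed
qed

lemma depths_bounded_by_runs_reachable:
  assumes "(rw H t)\<^sup>*\<^sup>* (Vr (init_conf H)) T"
  shows "depths_bounded_by_runs H t h T"
  using assms
proof (induction rule: rtranclp_induct)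
  case base
  have "is_run H t [init_conf H]"
    by (simp add: is_run_def)
  then show ?case
    unfolding depths_bounded_by_runs_def pos_def
    by (intro ballI exI[of _ "[init_conf H]"]) (auto elim: subt.elims)
next
  case step
  then show ?case
    using depths_bounded_by_runs_rw by blast
qed

lemma height_output_le:
  assumes out: "hm_output H t s"
    and narrow: "\<And>cs S. is_run H t cs \<Longrightarrow> S \<subseteq> pos t \<Longrightarrow> antichain S \<Longrightarrow> visits cs S \<le> N"
  shows "height s \<le> h * ((height t + 1) * N + 1)"
  unfolding height_le_iff
proof
  fix p assume "p \<in> pos s"
  with depths_bounded_by_runs_reachable out obtain cs where
    run: "is_run H t cs" and p: "length p \<le> h * length cs"
    unfolding hm_output_def depths_bounded_by_runs_def by blast
  from run narrow[OF run] have "length cs \<le> (height t + 1) * N + 1"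
    by (rule length_run_le)
  with p show "length p \<le> h * ((height t + 1) * N + 1)"
    by (meson le_trans mult_le_mono2)
qed

end

theorem mainTheorem15:
  fixes H :: "('q, 'm, 's, 'g) uthm"
  assumes "is_uTHM H" and "narrow_visit H"
  shows "is_THM H \<and>
         (\<exists>c d :: nat. \<forall>t s. wfT (Sig H) (rkS H) {} t \<longrightarrow> hm_output H t s \<longrightarrow>
             height s \<le> c * height t + d)"
proof
  obtain N where N: "\<And>t cs S. wfT (Sig H) (rkS H) {} t \<Longrightarrow> is_run H t cs \<Longrightarrow>
      S \<subseteq> pos t \<Longrightarrow> antichain S \<Longrightarrow> visits cs S \<le> N"
    using assms(2) unfolding narrow_visit_def by blast
  show "is_THM H"
    unfolding is_THM_def using assms(1) N antichain_singleton by blast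
  obtain h where h: "\<And>q \<sigma> m r. delta H q \<sigma> m = Some r \<Longrightarrow> height r \<le> h"
    using rhs_height_bounded[OF assms(1)] by blast
  have "height s \<le> h * N * height t + h * (N + 1)"
    if "wfT (Sig H) (rkS H) {} t" "hm_output H t s" for t s
    using height_output_le[OF h that(2) N[OF that(1)]] by (simp add: algebra_simps)
  then show "\<exists>c d :: nat. \<forall>t s. wfT (Sig H) (rkS H) {} t \<longrightarrow> hm_output H t s \<longrightarrow>
      height s \<le> c * height t + d"
    by blast
qed

end
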